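(* Let $\mathcal{V}$ be a commutative associative $\mathbb{C}$-algebra which is a domain, equipped with two commuting $\mathbb{C}$-linear derivations $\partial_1,\partial_2$, and let $a\in\mathcal{V}$ and $\mathcal{H}_a=\partial_1\partial_2+a$. For every $\mathcal{P}\in\mathcal{V}[\partial_2]((\partial_1^{-1}))$ there exists a unique $\mathcal{Q}\in\mathcal{V}[\partial_2]((\partial_1^{-1}))$ such that $\mathcal{P}-\mathcal{Q}\mathcal{H}_a\in\mathcal{V}((\partial_1^{-1}))$. The same holds with the roles of $\partial_1$ and $\partial_2$ exchanged.
   Context: $\mathcal{V}[\partial_2]((\partial_1^{-1}))$ denotes the algebra of formal pseudodifferential operators $\sum_{n\le N} p_n\partial_1^n$ with coefficients $p_n\in\mathcal{V}[\partial_2]$ (polynomials in $\partial_2$ with coefficients in $\mathcal{V}$), with multiplication determined by $\partial_i v=v\partial_i+\partial_i(v)$, $\partial_1\partial_2=\partial_2\partial_1$, and $\partial_1^{-1}v=v\partial_1^{-1}-\partial_1(v)\partial_1^{-2}+\partial_1^2(v)\partial_1^{-3}-\cdots$ for $v\in\mathcal{V}$. $\mathcal{V}((\partial_1^{-1}))$ is the subalgebra of such operators not involving $\partial_2$. *)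

theory Defs
  imports Complex_Main
begin

text \<open>The C-algebra structure of V is given by a unital ring homomorphism
  emb from the complex numbers into V.\<close>
definition complex_alg_hom :: "(complex \<Rightarrow> 'v::comm_ring_1) \<Rightarrow> bool" where
  "complex_alg_hom emb \<longleftrightarrow> emb 1 = 1 \<and> (\<forall>x y. emb (x + y) = emb x + emb y)
     \<and> (\<forall>x y. emb (x * y) = emb x * emb y)"

definition complex_derivation :: "(complex \<Rightarrow> 'v::comm_ring_1) \<Rightarrow> ('v \<Rightarrow> 'v) \<Rightarrow> bool" where
  "complex_derivation emb d \<longleftrightarrow> (\<forall>u v. d (u + v) = d u + d v)
     \<and> (\<forall>c v. d (emb c * v) = emb c * d v)
     \<and> (\<forall>u v. d (u * v) = d u * v + u * d v)"

text \<open>An element of V[d2]((d1^-1)) is represented by its coefficient function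
  P :: int => nat => V, P n j being the coefficient of d2^j d1^n, i.e.
  the operator is  sum_{n,j} P n j d2^j d1^n.\<close>
definition is_pdo :: "(int \<Rightarrow> nat \<Rightarrow> 'v::zero) \<Rightarrow> bool" where
  "is_pdo P \<longleftrightarrow> (\<exists>N. \<forall>n j. P n j \<noteq> 0 \<longrightarrow> n \<le> N) \<and> (\<forall>n. finite {j. P n j \<noteq> 0})"

text \<open>The subalgebra V((d1^-1)): no d2 involved.\<close>
definition is_pdo1 :: "(int \<Rightarrow> nat \<Rightarrow> 'v::zero) \<Rightarrow> bool" where
  "is_pdo1 P \<longleftrightarrow> is_pdo P \<and> (\<forall>n j. 0 < j \<longrightarrow> P n j = 0)"

text \<open>Generalized binomial coefficient n(n-1)...(n-b+1)/b! for integer n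
  (an integer; the division is exact).\<close>
definition int_binom :: "int \<Rightarrow> nat \<Rightarrow> int" where
  "int_binom n b = (\<Prod>i<b. n - int i) div fact b"

text \<open>Multiplication, from
  d2^j d1^n w = sum_{a,b} (j choose a) (n choose b) d2^a(d1^b(w)) d2^(j-a) d1^(n-b)
  (generalized binomial coefficient for integer n).\<close>
definition pdo_mult :: "('v::comm_ring_1 \<Rightarrow> 'v) \<Rightarrow> ('v \<Rightarrow> 'v)
    \<Rightarrow> (int \<Rightarrow> nat \<Rightarrow> 'v) \<Rightarrow> (int \<Rightarrow> nat \<Rightarrow> 'v) \<Rightarrow> int \<Rightarrow> nat \<Rightarrow> 'v" where
  "pdo_mult d1 d2 P Q = (\<lambda>s r.
     \<Sum>(n, j, m, k, a, b) \<in> {(n::int, j::nat, m::int, k::nat, a::nat, b::nat). P n j \<noteq> 0 \<and> Q m k \<noteq> 0 \<and> a \<le> j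
                              \<and> r = j + k - a \<and> s = n + m - int b}.
        P n j * of_nat (j choose a) * of_int (int_binom n b) * (d2 ^^ a) ((d1 ^^ b) (Q m k)))"

definition pdo_minus :: "(int \<Rightarrow> nat \<Rightarrow> 'v::ab_group_add) \<Rightarrow> (int \<Rightarrow> nat \<Rightarrow> 'v) \<Rightarrow> int \<Rightarrow> nat \<Rightarrow> 'v" where
  "pdo_minus P Q = (\<lambda>n j. P n j - Q n j)"

definition H_op :: "'v::comm_ring_1 \<Rightarrow> int \<Rightarrow> nat \<Rightarrow> 'v" where
  "H_op a = (\<lambda>n j. (if n = 1 \<and> j = 1 then 1 else 0) + (if n = 0 \<and> j = 0 then a else 0))"

end

theory Submission
  imports Defs
begin

text \<open>
  Multiplying by H_a = d1 d2 + a, the coefficient of d2^(j+1) d1^(n+1) in Q H_a is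
  Q_{n,j} plus a combination of derivatives of a with coefficients Q_{m,k}, m > n.
  Hence P - Q H_a is free of d2 exactly when each row Q_n is given by the
  corresponding row of P minus terms involving only the rows of Q above n: a
  recursion descending in the d1-order, which has exactly one solution vanishing
  above the d1-order of P, and that solution is again a pseudodifferential operator.
\<close>

lemma int_descending_induct [case_names above step]:
  fixes N :: int
  assumes above: "\<And>n. N \<le> n \<Longrightarrow> P n"
    and step: "\<And>n. n < N \<Longrightarrow> (\<And>m. n < m \<Longrightarrow> P m) \<Longrightarrow> P n"
  shows "P n"
proof (induction "nat (N - n)" arbitrary: n rule: less_induct)
  case less
  show ?case
  proof (cases "N \<le> n")
    case False
    show ?thesis
    proof (rule step)
      fix m assume "n < m"
      with False have "nat (N - m) < nat (N - n)" by simp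
      then show "P m" by (rule less)
    qed (use False in simp)
  qed (rule above)
qed

lemma ex1_descending_recursion:
  fixes F :: "int \<Rightarrow> (int \<Rightarrow> 'b) \<Rightarrow> 'b" and N :: int
  assumes local: "\<And>n X Y. (\<And>m. n < m \<Longrightarrow> X m = Y m) \<Longrightarrow> F n X = F n Y"
  shows "\<exists>!X. \<forall>n. X n = (if n < N then F n X else c)"
proof (rule ex1I)
  \<comment> \<open>below N, F n may only look at larger indices, which are bounded by N\<close>
  define R where "R = {(m, n). n < m \<and> n < N}"
  have "R \<subseteq> measure (\<lambda>n. nat (N - n))" by (auto simp: R_def)
  then have "wf R" by (rule wf_subset[OF wf_measure])
  define X where "X = wfrec R (\<lambda>f n. if n < N then F n f else c)"
  show "\<forall>n. X n = (if n < N then F n X else c)"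
  proof
    fix n
    have "X n = (if n < N then F n (cut X R n) else c)"
      unfolding X_def by (subst wfrec[OF \<open>wf R\<close>]) simp
    moreover have "n < N \<Longrightarrow> F n (cut X R n) = F n X"
      by (rule local) (simp add: cut_apply R_def)
    ultimately show "X n = (if n < N then F n X else c)" by simp
  qed
  fix Y assume Y: "\<forall>n. Y n = (if n < N then F n Y else c)"
  show "Y = X"
  proof
    fix n show "Y n = X n"
    proof (induction n rule: int_descending_induct[where N = N])
      case (above n) then show ?case
        using Y \<open>\<forall>n. X n = _\<close> by simp
    next
      case (step n)
      then have "F n Y = F n X" by (intro local)
      then show ?case using Y \<open>\<forall>n. X n = _\<close> step(1) by simp
    qed
  qed
qed

lemma funpow_fixpoint: "d x = x \<Longrightarrow> (d ^^ n) x = x"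
  by (induction n) simp_all

lemma funpow_one_eq_0:
  fixes d :: "'a::{zero, one} \<Rightarrow> 'a"
  assumes "d 0 = 0" and "d 1 = 0" and "0 < n"
  shows "(d ^^ n) 1 = 0"
  using assms by (cases n) (simp_all add: funpow_Suc_right funpow_fixpoint del: funpow.simps)

lemma funpow_funpow_one_eq_0:
  fixes d1 d2 :: "'a::{zero, one} \<Rightarrow> 'a"
  assumes "d1 0 = 0" "d1 1 = 0" "d2 0 = 0" "d2 1 = 0" and "b \<noteq> 0 \<or> c \<noteq> 0"
  shows "(d2 ^^ c) ((d1 ^^ b) 1) = 0"
  using assms by (cases "b = 0") (simp_all add: funpow_one_eq_0 funpow_fixpoint)

definition pdo_mult_index ::
    "(int \<Rightarrow> nat \<Rightarrow> 'v::zero) \<Rightarrow> (int \<Rightarrow> nat \<Rightarrow> 'v) \<Rightarrow> int \<Rightarrow> nat \<Rightarrow> (int \<times> nat \<times> int \<times> nat \<times> nat \<times> nat) set" where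
  "pdo_mult_index P Q s r = {(n, j, m, k, a, b). P n j \<noteq> 0 \<and> Q m k \<noteq> 0 \<and> a \<le> j
     \<and> r = j + k - a \<and> s = n + m - int b}"

definition pdo_mult_term :: "('v::comm_ring_1 \<Rightarrow> 'v) \<Rightarrow> ('v \<Rightarrow> 'v)
    \<Rightarrow> (int \<Rightarrow> nat \<Rightarrow> 'v) \<Rightarrow> (int \<Rightarrow> nat \<Rightarrow> 'v) \<Rightarrow> int \<times> nat \<times> int \<times> nat \<times> nat \<times> nat \<Rightarrow> 'v" where
  "pdo_mult_term d1 d2 P Q = (\<lambda>(n, j, m, k, a, b).
     P n j * of_nat (j choose a) * of_int (int_binom n b) * (d2 ^^ a) ((d1 ^^ b) (Q m k)))"

lemma pdo_mult_eq_sum: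
  "pdo_mult d1 d2 P Q s r = sum (pdo_mult_term d1 d2 P Q) (pdo_mult_index P Q s r)"
  by (simp add: pdo_mult_def pdo_mult_term_def pdo_mult_index_def)

lemma finite_pdo_mult_row_index:
  assumes "is_pdo P" and "is_pdo Q"
  shows "finite {(n, j, m, k, a, b). P n j \<noteq> 0 \<and> Q m k \<noteq> 0 \<and> a \<le> j \<and> s = n + m - int b}"
    (is "finite ?I")
proof -
  obtain NP where NP: "\<And>n j. P n j \<noteq> 0 \<Longrightarrow> n \<le> NP" and rowP: "\<And>n. finite {j. P n j \<noteq> 0}"
    using assms(1) unfolding is_pdo_def by blast
  obtain NQ where NQ: "\<And>m k. Q m k \<noteq> 0 \<Longrightarrow> m \<le> NQ" and rowQ: "\<And>m. finite {k. Q m k \<noteq> 0}"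
    using assms(2) unfolding is_pdo_def by blast
  define J where "J = (\<Union>n\<in>{s - NQ..NP}. {j. P n j \<noteq> 0})"
  define K where "K = (\<Union>m\<in>{s - NP..NQ}. {k. Q m k \<noteq> 0})"
  define B where "B = {s - NQ..NP} \<times> J \<times> {s - NP..NQ} \<times> K \<times> (\<Union>j\<in>J. {..j}) \<times> {..nat (NP + NQ - s)}"
  have "(n, j, m, k, a, b) \<in> B"
    if "P n j \<noteq> 0" "Q m k \<noteq> 0" "a \<le> j" "s = n + m - int b" for n j m k a b
  proof -
    from that NP NQ have "n \<le> NP" "m \<le> NQ" by blast+
    with that show ?thesis by (auto simp: B_def J_def K_def)
  qed
  then have "?I \<subseteq> B" by auto
  moreover have "finite J" "finite K" using rowP rowQ by (auto simp: J_def K_def)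
  ultimately have "finite B" by (simp add: B_def)
  with \<open>?I \<subseteq> B\<close> show ?thesis by (rule finite_subset)
qed

lemma finite_pdo_mult_index:
  "is_pdo P \<Longrightarrow> is_pdo Q \<Longrightarrow> finite (pdo_mult_index P Q s r)"
  by (rule finite_subset[OF _ finite_pdo_mult_row_index[of P Q s]]) (auto simp: pdo_mult_index_def)

lemma is_pdo_pdo_mult:
  fixes P Q :: "int \<Rightarrow> nat \<Rightarrow> 'v::comm_ring_1"
  assumes "is_pdo P" and "is_pdo Q"
  shows "is_pdo (pdo_mult d1 d2 P Q)"
proof -
  obtain NP where NP: "\<And>n j. P n j \<noteq> 0 \<Longrightarrow> n \<le> NP"
    using assms(1) unfolding is_pdo_def by blast
  obtain NQ where NQ: "\<And>m k. Q m k \<noteq> 0 \<Longrightarrow> m \<le> NQ"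
    using assms(2) unfolding is_pdo_def by blast
  have index: "pdo_mult_index P Q s r \<noteq> {}" if "pdo_mult d1 d2 P Q s r \<noteq> 0" for s r
    using that by (auto simp: pdo_mult_eq_sum)
  have "s \<le> NP + NQ" if "pdo_mult d1 d2 P Q s r \<noteq> 0" for s r
    using index[OF that] NP NQ by (fastforce simp: pdo_mult_index_def)
  moreover have "finite {r. pdo_mult d1 d2 P Q s r \<noteq> 0}" for s
  proof (rule finite_subset[OF _ finite_imageI[OF finite_pdo_mult_row_index[OF assms]]])
    show "{r. pdo_mult d1 d2 P Q s r \<noteq> 0} \<subseteq> (\<lambda>(n, j, m, k, a, b). j + k - a) `
        {(n, j, m, k, a, b). P n j \<noteq> 0 \<and> Q m k \<noteq> 0 \<and> a \<le> j \<and> s = n + m - int b}"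
    proof
      fix r assume "r \<in> {r. pdo_mult d1 d2 P Q s r \<noteq> 0}"
      then obtain n j m k a b where "(n, j, m, k, a, b) \<in> pdo_mult_index P Q s r"
        using index by fast
      then show "r \<in> (\<lambda>(n, j, m, k, a, b). j + k - a) `
          {(n, j, m, k, a, b). P n j \<noteq> 0 \<and> Q m k \<noteq> 0 \<and> a \<le> j \<and> s = n + m - int b}"
        by (auto simp: pdo_mult_index_def intro!: image_eqI[where x = "(n, j, m, k, a, b)"])
    qed
  qed
  ultimately show ?thesis unfolding is_pdo_def by blast
qed

lemma is_pdo_pdo_minus:
  assumes "is_pdo P" and "is_pdo Q"
  shows "is_pdo (pdo_minus P Q)"
proof -
  obtain NP NQ where "\<And>n j. P n j \<noteq> 0 \<Longrightarrow> n \<le> NP" "\<And>n j. Q n j \<noteq> 0 \<Longrightarrow> n \<le> NQ"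
    using assms unfolding is_pdo_def by metis
  moreover have "pdo_minus P Q n j \<noteq> 0 \<Longrightarrow> P n j \<noteq> 0 \<or> Q n j \<noteq> 0" for n j
    by (auto simp: pdo_minus_def)
  ultimately have "pdo_minus P Q n j \<noteq> 0 \<Longrightarrow> n \<le> max NP NQ" for n j
    by (meson max.coboundedI1 max.coboundedI2)
  moreover have "{j. pdo_minus P Q n j \<noteq> 0} \<subseteq> {j. P n j \<noteq> 0} \<union> {j. Q n j \<noteq> 0}" for n
    by (auto simp: pdo_minus_def)
  ultimately show ?thesis
    using assms unfolding is_pdo_def by (meson finite_Un finite_subset)
qed

lemma is_pdo_H_op: "is_pdo (H_op a)"
proof -
  have "H_op a n j \<noteq> 0 \<Longrightarrow> n \<le> 1" for n j
    by (auto simp: H_op_def split: if_splits)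
  moreover have "{j. H_op a n j \<noteq> 0} \<subseteq> {0, 1}" for n
    by (auto simp: H_op_def split: if_splits)
  ultimately show ?thesis
    unfolding is_pdo_def by (meson finite.emptyI finite.insertI finite_subset)
qed
text \<open>The coefficient of d2^r d1^s in Q a, with a acting as an operator of order zero.\<close>
definition pdo_mult_elem :: "('v::comm_ring_1 \<Rightarrow> 'v) \<Rightarrow> ('v \<Rightarrow> 'v)
    \<Rightarrow> (int \<Rightarrow> nat \<Rightarrow> 'v) \<Rightarrow> 'v \<Rightarrow> int \<Rightarrow> nat \<Rightarrow> 'v" where
  "pdo_mult_elem d1 d2 Q a s r = (\<Sum>(n, j) | Q n j \<noteq> 0 \<and> s \<le> n \<and> r \<le> j.
     Q n j * of_nat (j choose (j - r)) * of_int (int_binom n (nat (n - s)))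
       * (d2 ^^ (j - r)) ((d1 ^^ nat (n - s)) a))"

lemma pdo_mult_elem_cong:
  assumes "\<And>n j. s \<le> n \<Longrightarrow> Q n j = Q' n j"
  shows "pdo_mult_elem d1 d2 Q a s r = pdo_mult_elem d1 d2 Q' a s r"
  unfolding pdo_mult_elem_def using assms by (intro sum.cong) auto

lemma pdo_mult_elem_nonzero:
  assumes "pdo_mult_elem d1 d2 Q a s r \<noteq> 0"
  obtains n j where "Q n j \<noteq> 0" "s \<le> n" "r \<le> j"
proof -
  have "{(n, j). Q n j \<noteq> 0 \<and> s \<le> n \<and> r \<le> j} \<noteq> {}"
  proof
    assume "{(n, j). Q n j \<noteq> 0 \<and> s \<le> n \<and> r \<le> j} = {}"
    with assms show False unfolding pdo_mult_elem_def by simp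
  qed
  with that show ?thesis by blast
qed

lemma H_op_nonzero: "H_op a m k \<noteq> 0 \<Longrightarrow> (m = 1 \<and> k = 1) \<or> (m = 0 \<and> k = 0 \<and> a \<noteq> 0)"
  by (auto simp: H_op_def split: if_splits)

lemma sum_pdo_mult_term_H_d1d2:
  fixes Q :: "int \<Rightarrow> nat \<Rightarrow> 'v::comm_ring_1"
  assumes "is_pdo Q"
    and "d1 0 = 0" "d1 1 = 0" "d2 0 = 0" "d2 1 = 0"
  shows "sum (pdo_mult_term d1 d2 Q (H_op a))
           {(n, j, m, k, c, b) \<in> pdo_mult_index Q (H_op a) s r. m = 1}
         = (if 0 < r then Q (s - 1) (r - 1) else 0)"
    (is "sum ?f ?I = _")
proof -
  define T where "T = (if 0 < r \<and> Q (s - 1) (r - 1) \<noteq> 0 then {(s - 1, r - 1, 1::int, 1::nat, 0::nat, 0::nat)} else {})"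
  have "finite ?I"
    using finite_pdo_mult_index[OF assms(1) is_pdo_H_op] by (rule finite_subset[rotated]) auto
  moreover have "T \<subseteq> ?I" by (auto simp: T_def pdo_mult_index_def H_op_def)
  moreover have "?f t = 0" if "t \<in> ?I - T" for t
  proof -
    obtain n j k c b where t: "t = (n, j, 1, k, c, b)" and "(n, j, 1, k, c, b) \<in> pdo_mult_index Q (H_op a) s r"
      using \<open>t \<in> ?I - T\<close> by blast
    then have "k = 1" "Q n j \<noteq> 0" "c \<le> j" "r = j + 1 - c" "s = n + 1 - int b"
      using H_op_nonzero[of a 1 k] by (auto simp: pdo_mult_index_def)
    have "c \<noteq> 0 \<or> b \<noteq> 0"
    proof (rule ccontr)
      assume "\<not> (c \<noteq> 0 \<or> b \<noteq> 0)"
      with t \<open>k = 1\<close> \<open>Q n j \<noteq> 0\<close> \<open>r = j + 1 - c\<close> \<open>s = n + 1 - int b\<close>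
      have "t \<in> T" by (simp add: T_def)
      with that show False by blast
    qed
    then have "(d2 ^^ c) ((d1 ^^ b) 1) = 0"
      using assms(2-) by (intro funpow_funpow_one_eq_0) auto
    with t \<open>k = 1\<close> show ?thesis by (simp add: pdo_mult_term_def H_op_def)
  qed
  ultimately have "sum ?f ?I = sum ?f T" by (intro sum.mono_neutral_right) auto
  also have "\<dots> = (if 0 < r then Q (s - 1) (r - 1) else 0)"
    by (auto simp: T_def pdo_mult_term_def H_op_def int_binom_def)
  finally show ?thesis .
qed

lemma sum_pdo_mult_term_H_elem:
  fixes Q :: "int \<Rightarrow> nat \<Rightarrow> 'v::comm_ring_1"
  assumes "d1 0 = 0" "d2 0 = 0"
  shows "sum (pdo_mult_term d1 d2 Q (H_op a))
           {(n, j, m, k, c, b) \<in> pdo_mult_index Q (H_op a) s r. m = 0}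
         = pdo_mult_elem d1 d2 Q a s r"
    (is "sum ?f ?I = _")
proof (cases "a = 0")
  case True
  then have "?I = {}" by (auto simp: pdo_mult_index_def H_op_def)
  moreover have "pdo_mult_elem d1 d2 Q a s r = 0"
    unfolding pdo_mult_elem_def by (rule sum.neutral) (simp add: True assms funpow_fixpoint)
  ultimately show ?thesis by (metis sum.empty)
next
  case False
  define g where "g = (\<lambda>(n::int, j::nat). (n, j, 0::int, 0::nat, j - r, nat (n - s)))"
  have "?I = g ` {(n, j). Q n j \<noteq> 0 \<and> s \<le> n \<and> r \<le> j}"
  proof
    show "?I \<subseteq> g ` {(n, j). Q n j \<noteq> 0 \<and> s \<le> n \<and> r \<le> j}"
    proof
      fix t assume "t \<in> ?I"
      then obtain n j k c b where t: "t = (n, j, 0, k, c, b)"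
        and "(n, j, 0, k, c, b) \<in> pdo_mult_index Q (H_op a) s r"
        by blast
      then have "k = 0" "Q n j \<noteq> 0" "c \<le> j" "r = j - c" "s = n - int b"
        using H_op_nonzero[of a 0 k] by (auto simp: pdo_mult_index_def)
      with t show "t \<in> g ` {(n, j). Q n j \<noteq> 0 \<and> s \<le> n \<and> r \<le> j}"
        by (auto simp: g_def intro!: image_eqI[where x = "(n, j)"])
    qed
    show "g ` {(n, j). Q n j \<noteq> 0 \<and> s \<le> n \<and> r \<le> j} \<subseteq> ?I"
      using False by (auto simp: g_def pdo_mult_index_def H_op_def)
  qed
  moreover have "inj g" by (auto simp: inj_on_def g_def)
  ultimately have "sum ?f ?I = (\<Sum>(n, j) | Q n j \<noteq> 0 \<and> s \<le> n \<and> r \<le> j. ?f (g (n, j)))"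
    by (simp add: sum.reindex inj_on_subset case_prod_beta')
  also have "\<dots> = pdo_mult_elem d1 d2 Q a s r"
    unfolding pdo_mult_elem_def by (intro sum.cong) (auto simp: g_def pdo_mult_term_def H_op_def)
  finally show ?thesis .
qed

lemma pdo_mult_H_op:
  fixes Q :: "int \<Rightarrow> nat \<Rightarrow> 'v::comm_ring_1"
  assumes "is_pdo Q"
    and "d1 0 = 0" "d1 1 = 0" "d2 0 = 0" "d2 1 = 0"
  shows "pdo_mult d1 d2 Q (H_op a) s r
         = (if 0 < r then Q (s - 1) (r - 1) else 0) + pdo_mult_elem d1 d2 Q a s r"
proof -
  let ?f = "pdo_mult_term d1 d2 Q (H_op a)"
  let ?I = "pdo_mult_index Q (H_op a) s r"
  let ?J = "{(n, j, m, k, c, b) \<in> ?I. m = 1}" and ?K = "{(n, j, m, k, c, b) \<in> ?I. m = 0}"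
  have "?I \<subseteq> ?J \<union> ?K"
  proof
    fix t assume "t \<in> ?I"
    then obtain n j m k c b where "t = (n, j, m, k, c, b)" "H_op a m k \<noteq> 0"
      by (auto simp: pdo_mult_index_def)
    with \<open>t \<in> ?I\<close> H_op_nonzero[of a m k] show "t \<in> ?J \<union> ?K" by auto
  qed
  then have split: "?I = ?J \<union> ?K" by blast
  have "finite ?I" using assms(1) is_pdo_H_op by (rule finite_pdo_mult_index)
  then have "finite ?J" "finite ?K" by (rule finite_subset[rotated], blast)+
  moreover have "?J \<inter> ?K = {}" by (simp add: disjoint_iff split_paired_all)
  ultimately have "sum ?f (?J \<union> ?K) = sum ?f ?J + sum ?f ?K"
    by (rule sum.union_disjoint)
  with arg_cong[OF split, of "sum ?f"] have "sum ?f ?I = sum ?f ?J + sum ?f ?K"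
    by (rule trans)
  then show ?thesis
    using sum_pdo_mult_term_H_d1d2[of Q d1 d2, OF assms] sum_pdo_mult_term_H_elem[of d1 d2, OF assms(2,4)]
    by (simp add: pdo_mult_eq_sum)
qed

text \<open>Row n of Q as read off from the coefficient of d2^(j+1) d1^(n+1) in P = Q H_a + R,
  R free of d2; it involves only the rows of Q above n.\<close>
definition H_quotient_step :: "('v::comm_ring_1 \<Rightarrow> 'v) \<Rightarrow> ('v \<Rightarrow> 'v)
    \<Rightarrow> (int \<Rightarrow> nat \<Rightarrow> 'v) \<Rightarrow> 'v \<Rightarrow> int \<Rightarrow> (int \<Rightarrow> nat \<Rightarrow> 'v) \<Rightarrow> nat \<Rightarrow> 'v" where
  "H_quotient_step d1 d2 P a n Q = (\<lambda>j. P (n + 1) (Suc j) - pdo_mult_elem d1 d2 Q a (n + 1) (Suc j))"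

lemma H_quotient_step_cong:
  "(\<And>m. n < m \<Longrightarrow> X m = Y m) \<Longrightarrow> H_quotient_step d1 d2 P a n X = H_quotient_step d1 d2 P a n Y"
  unfolding H_quotient_step_def by (intro ext arg_cong2[where f = minus] pdo_mult_elem_cong) auto

lemma H_quotient_recursion_truncate:
  assumes "\<And>n j. P n j \<noteq> 0 \<Longrightarrow> n \<le> N" and "\<And>m j. N \<le> m \<Longrightarrow> X m j = 0"
  shows "(\<forall>n. X n = H_quotient_step d1 d2 P a n X)
    \<longleftrightarrow> (\<forall>n. X n = (if n < N then H_quotient_step d1 d2 P a n X else (\<lambda>j. 0)))"
proof -
  have "H_quotient_step d1 d2 P a n X j = 0" if "N \<le> n" for n j
  proof -
    have "P (n + 1) (Suc j) = 0" using assms(1) that by force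
    moreover have "pdo_mult_elem d1 d2 X a (n + 1) (Suc j) = 0"
    proof (rule ccontr)
      assume "pdo_mult_elem d1 d2 X a (n + 1) (Suc j) \<noteq> 0"
      then obtain m k where "X m k \<noteq> 0" "n + 1 \<le> m" by (rule pdo_mult_elem_nonzero)
      with assms(2) that show False by simp
    qed
    ultimately show ?thesis by (simp add: H_quotient_step_def)
  qed
  with assms(2) have "X n = (if n < N then H_quotient_step d1 d2 P a n X else (\<lambda>j. 0))
      \<longleftrightarrow> X n = H_quotient_step d1 d2 P a n X" for n
    by (cases "n < N") (auto simp: fun_eq_iff)
  then show ?thesis by simp
qed

lemma is_pdo1_remainder_H_op_iff:
  fixes P Q :: "int \<Rightarrow> nat \<Rightarrow> 'v::comm_ring_1"
  assumes "is_pdo P" and "is_pdo Q"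
    and "d1 0 = 0" "d1 1 = 0" "d2 0 = 0" "d2 1 = 0"
  shows "is_pdo1 (pdo_minus P (pdo_mult d1 d2 Q (H_op a)))
    \<longleftrightarrow> (\<forall>n. Q n = H_quotient_step d1 d2 P a n Q)"
proof -
  let ?E = "pdo_mult_elem d1 d2 Q a"
  have "is_pdo (pdo_minus P (pdo_mult d1 d2 Q (H_op a)))"
    by (intro is_pdo_pdo_minus is_pdo_pdo_mult is_pdo_H_op assms)
  then have "is_pdo1 (pdo_minus P (pdo_mult d1 d2 Q (H_op a)))
      \<longleftrightarrow> (\<forall>n j. 0 < j \<longrightarrow> P n j - (Q (n - 1) (j - 1) + ?E n j) = 0)"
    by (simp add: is_pdo1_def pdo_minus_def pdo_mult_H_op[OF assms(2-)])
  also have "\<dots> \<longleftrightarrow> (\<forall>n j. P (n + 1) (Suc j) - (Q n j + ?E (n + 1) (Suc j)) = 0)"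
  proof
    assume "\<forall>n j. 0 < j \<longrightarrow> P n j - (Q (n - 1) (j - 1) + ?E n j) = 0"
    then show "\<forall>n j. P (n + 1) (Suc j) - (Q n j + ?E (n + 1) (Suc j)) = 0"
      by (metis add_diff_cancel_right' diff_Suc_1 zero_less_Suc)
  next
    assume *: "\<forall>n j. P (n + 1) (Suc j) - (Q n j + ?E (n + 1) (Suc j)) = 0"
    show "\<forall>n j. 0 < j \<longrightarrow> P n j - (Q (n - 1) (j - 1) + ?E n j) = 0"
    proof (intro allI impI)
      fix n :: int and j :: nat assume "0 < j"
      with *[rule_format, of "n - 1" "j - 1"] show "P n j - (Q (n - 1) (j - 1) + ?E n j) = 0"
        by simp
    qed
  qed
  also have "\<dots> \<longleftrightarrow> (\<forall>n. Q n = H_quotient_step d1 d2 P a n Q)"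
    by (simp add: H_quotient_step_def fun_eq_iff eq_diff_eq) (metis add.commute)
  finally show ?thesis .
qed

lemma finite_dominated_degrees:
  fixes Q :: "int \<Rightarrow> nat \<Rightarrow> 'v::zero"
  assumes "\<And>n j. Q n j \<noteq> 0 \<Longrightarrow> n \<le> N" and "\<And>n. s \<le> n \<Longrightarrow> finite {j. Q n j \<noteq> 0}"
  shows "finite {r. \<exists>n j. Q n j \<noteq> 0 \<and> s \<le> n \<and> r \<le> j}"
proof (rule finite_subset)
  show "{r. \<exists>n j. Q n j \<noteq> 0 \<and> s \<le> n \<and> r \<le> j} \<subseteq> (\<Union>n\<in>{s..N}. \<Union>j\<in>{j. Q n j \<noteq> 0}. {..j})"
    using assms(1) by fastforce
  show "finite (\<Union>n\<in>{s..N}. \<Union>j\<in>{j. Q n j \<noteq> 0}. {..j})"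
    using assms(2) by auto
qed

lemma finite_rows_of_H_quotient:
  fixes Q :: "int \<Rightarrow> nat \<Rightarrow> 'v::comm_ring_1"
  assumes "is_pdo P"
    and rec: "\<And>n. Q n = H_quotient_step d1 d2 P a n Q"
    and bound: "\<And>n j. Q n j \<noteq> 0 \<Longrightarrow> n < N"
  shows "finite {j. Q n j \<noteq> 0}"
proof (induction n rule: int_descending_induct[where N = N])
  case (above n)
  then have "{j. Q n j \<noteq> 0} = {}" using bound by force
  then show ?case by simp
next
  case (step n)
  let ?D = "{r. \<exists>m j. Q m j \<noteq> 0 \<and> n + 1 \<le> m \<and> r \<le> j}"
  have "{j. Q n j \<noteq> 0} \<subseteq> Suc -` {j. P (n + 1) j \<noteq> 0} \<union> Suc -` ?D"
  proof
    fix j assume "j \<in> {j. Q n j \<noteq> 0}"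
    then have "P (n + 1) (Suc j) \<noteq> 0 \<or> pdo_mult_elem d1 d2 Q a (n + 1) (Suc j) \<noteq> 0"
      using fun_cong[OF rec[of n], of j] by (auto simp: H_quotient_step_def)
    then show "j \<in> Suc -` {j. P (n + 1) j \<noteq> 0} \<union> Suc -` ?D"
      by (auto elim!: pdo_mult_elem_nonzero)
  qed
  moreover have "finite ?D"
  proof (rule finite_dominated_degrees)
    show "Q m j \<noteq> 0 \<Longrightarrow> m \<le> N" for m j using bound by (simp add: less_imp_le)
    show "n + 1 \<le> m \<Longrightarrow> finite {j. Q m j \<noteq> 0}" for m using step(2) by simp
  qed
  moreover have "finite {j. P (n + 1) j \<noteq> 0}" using \<open>is_pdo P\<close> by (simp add: is_pdo_def)
  ultimately show ?case by (meson finite_Un finite_subset finite_vimageI inj_Suc)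
qed

lemma ex_pdo_H_quotient:
  assumes "is_pdo P"
  shows "\<exists>Q. is_pdo Q \<and> (\<forall>n. Q n = H_quotient_step d1 d2 P a n Q)"
proof -
  let ?F = "H_quotient_step d1 d2 P a"
  obtain N where N: "\<And>n j. P n j \<noteq> 0 \<Longrightarrow> n \<le> N"
    using assms unfolding is_pdo_def by blast
  obtain Q where Q: "\<forall>n. Q n = (if n < N then ?F n Q else (\<lambda>j. 0))"
    using ex1_descending_recursion[of ?F N "\<lambda>j. 0"] H_quotient_step_cong by blast
  then have zero: "Q m j = 0" if "N \<le> m" for m j
    using that by (simp add: not_less[symmetric])
  then have bound: "Q n j \<noteq> 0 \<Longrightarrow> n < N" for n j
    by (meson not_less)
  have rec: "\<forall>n. Q n = ?F n Q"
    using Q H_quotient_recursion_truncate[of P N Q] N zero by blast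
  have "is_pdo Q"
    using bound finite_rows_of_H_quotient[OF assms] rec
    unfolding is_pdo_def by (meson less_imp_le)
  with rec show ?thesis by blast
qed

lemma H_quotient_unique:
  assumes "is_pdo P" and "is_pdo Q1" and "is_pdo Q2"
    and "\<forall>n. Q1 n = H_quotient_step d1 d2 P a n Q1"
    and "\<forall>n. Q2 n = H_quotient_step d1 d2 P a n Q2"
  shows "Q1 = Q2"
proof -
  let ?F = "H_quotient_step d1 d2 P a"
  obtain NP N1 N2 where NP: "\<And>n j. P n j \<noteq> 0 \<Longrightarrow> n \<le> NP"
    and N1: "\<And>n j. Q1 n j \<noteq> 0 \<Longrightarrow> n \<le> N1" and N2: "\<And>n j. Q2 n j \<noteq> 0 \<Longrightarrow> n \<le> N2"
    using assms(1-3) unfolding is_pdo_def by metis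
  define N where "N = max NP (max N1 N2 + 1)"
  have "NP \<le> N" "N1 < N" "N2 < N" by (simp_all add: N_def)
  then have P_bound: "P n j \<noteq> 0 \<Longrightarrow> n \<le> N" for n j
    using NP by (meson order.trans)
  have Q1_zero: "Q1 m j = 0" and Q2_zero: "Q2 m j = 0" if "N \<le> m" for m j
    using N1[of m j] N2[of m j] that \<open>N1 < N\<close> \<open>N2 < N\<close> by fastforce+
  have "\<forall>n. Q1 n = (if n < N then ?F n Q1 else (\<lambda>j. 0))"
    using assms(4) H_quotient_recursion_truncate[of P N Q1] P_bound Q1_zero by blast
  moreover have "\<forall>n. Q2 n = (if n < N then ?F n Q2 else (\<lambda>j. 0))"
    using assms(5) H_quotient_recursion_truncate[of P N Q2] P_bound Q2_zero by blast
  ultimately show ?thesis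
    using ex1_descending_recursion[of ?F N "\<lambda>j. 0"] H_quotient_step_cong by blast
qed

lemma ex1_pdo_quotient_H_op:
  fixes P :: "int \<Rightarrow> nat \<Rightarrow> 'v::comm_ring_1"
  assumes "is_pdo P"
    and "d1 0 = 0" "d1 1 = 0" "d2 0 = 0" "d2 1 = 0"
  shows "\<exists>!Q. is_pdo Q \<and> is_pdo1 (pdo_minus P (pdo_mult d1 d2 Q (H_op a)))"
  using ex_pdo_H_quotient[OF assms(1)] H_quotient_unique[OF assms(1)]
    is_pdo1_remainder_H_op_iff[OF assms(1) _ assms(2-)]
  by metis

lemma complex_derivation_zero_one:
  assumes "complex_derivation emb d"
  shows "d 0 = 0" and "d 1 = 0"
proof -
  have "d (0 + 0) = d 0 + d 0" and "d (1 * 1) = d 1 * 1 + 1 * d 1"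
    using assms unfolding complex_derivation_def by blast+
  then show "d 0 = 0" and "d 1 = 0" by simp_all
qed

theorem lemma1:
  fixes emb :: "complex \<Rightarrow> 'v::idom"
    and d1 d2 :: "'v \<Rightarrow> 'v"
    and a :: 'v
  assumes "complex_alg_hom emb"
    and "complex_derivation emb d1"
    and "complex_derivation emb d2"
    and "\<And>v. d1 (d2 v) = d2 (d1 v)"
  shows "(\<forall>P. is_pdo P \<longrightarrow>
            (\<exists>!Q. is_pdo Q \<and> is_pdo1 (pdo_minus P (pdo_mult d1 d2 Q (H_op a)))))
       \<and> (\<forall>P. is_pdo P \<longrightarrow>
            (\<exists>!Q. is_pdo Q \<and> is_pdo1 (pdo_minus P (pdo_mult d2 d1 Q (H_op a)))))"
  using ex1_pdo_quotient_H_op complex_derivation_zero_one[OF assms(2)]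
    complex_derivation_zero_one[OF assms(3)]
  by blast

end
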